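(* Let $n\ge3$, $2\le t\le\lceil n/2\rceil$, and let $\mathsf{X}=\mathsf{C}_n(t;i,j)$ with $1\le i<j\le t$ and $j\ne i+1$. Then \[F_2(\mathsf{X})=\begin{cases}(t-1)(n-t+1) & \text{if } i=1 \text{ and } j=t,\\ (n-t+1)\big[(t-j+i)(j-i+1)-1\big] & \text{otherwise.}\end{cases}\]
   Context: $\mathsf{C}_n(t;i,j)$ ($i<j$) denotes the $n$-cycle with vertices $v_1,\dots,v_n$ in cyclic order (edges $v_kv_{k+1}$ and $v_nv_1$), with marked (ramified) vertices $v_1$ and $v_t$, together with one additional edge between $v_i$ and $v_j$. $F_2$ is the number of spanning forests consisting of two trees, one containing $v_1$ and the other containing $v_t$. *)

theory Defs
  imports Main
begin

text \<open>Undirected graphs on vertex set {1..n}; an edge is a 2-element set of vertices.\<close>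

text \<open>C_n(t;i,j): the n-cycle v_1,...,v_n (v_k = k) plus the extra edge {v_i, v_j}.
  (The marked vertices v_1, v_t enter only through F_2 below.)\<close>
definition cycle_chord_edges :: "nat \<Rightarrow> nat \<Rightarrow> nat \<Rightarrow> nat set set" where
  "cycle_chord_edges n i j =
     {{k, Suc k} | k. 1 \<le> k \<and> k < n} \<union> {{n, 1}} \<union> {{i, j}}"

definition conn :: "nat set set \<Rightarrow> nat \<Rightarrow> nat \<Rightarrow> bool" where
  "conn F u v = (\<lambda>x y. {x, y} \<in> F)\<^sup>*\<^sup>* u v"

definition acyclic_edges :: "nat set set \<Rightarrow> bool" where
  "acyclic_edges F = (\<forall>e\<in>F. \<forall>x y. e = {x, y} \<longrightarrow> \<not> conn (F - {e}) x y)"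

definition two_tree_forest :: "nat \<Rightarrow> nat set set \<Rightarrow> nat \<Rightarrow> nat \<Rightarrow> nat set set \<Rightarrow> bool" where
  "two_tree_forest n E a b F =
     (F \<subseteq> E \<and> acyclic_edges F \<and>
      (\<forall>v\<in>{1..n}. conn F a v \<or> conn F b v) \<and> \<not> conn F a b)"

definition F2 :: "nat \<Rightarrow> nat set set \<Rightarrow> nat \<Rightarrow> nat \<Rightarrow> nat" where
  "F2 n E a b = card {F. two_tree_forest n E a b F}"

end

theory Submission
  imports Defs
begin

text \<open>
  Let edge k of the cycle join v_k and v_(k+1), indices modulo n. The vertices v_1 and v_t
  split the cycle into an inner arc (edges 1, ..., t - 1), which carries the chord, and an
  outer arc (edges t, ..., n). A spanning forest whose two trees separate v_1 from v_t omits
  exactly one outer edge: omitting none joins v_1 to v_t, omitting two isolates the vertices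
  in between. Of the t inner edges (arc edges and chord) it omits exactly two: one must break
  the cycle that the chord closes with the m = j - i arc edges it spans, one must lie outside
  these m edges to keep v_1 and v_t apart, and a third omitted edge would again isolate a
  segment the chord cannot reach. Conversely each such choice gives a two-tree forest. With
  s = i - 1 + t - j the number of remaining arc edges, t = s + m + 1 and the admissible pairs
  number C(t,2) - C(s,2) - C(m,2) = (s + 1)(m + 1) - 1.
\<close>

lemma conn_refl [simp]: "conn F u u"
  by (simp add: conn_def)

lemma conn_edge: "{u, v} \<in> F \<Longrightarrow> conn F u v"
  by (simp add: conn_def r_into_rtranclp)

lemma conn_trans [trans]: "conn F u v \<Longrightarrow> conn F v w \<Longrightarrow> conn F u w"
  unfolding conn_def by (rule rtranclp_trans)

lemma conn_sym: "conn F u v \<Longrightarrow> conn F v u"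
  unfolding conn_def
proof (induction rule: rtranclp_induct)
  case (step y z)
  then have "{z, y} \<in> F" by (simp add: insert_commute)
  with step.IH show ?case by (meson converse_rtranclp_into_rtranclp)
qed simp

lemma conn_mono: "conn F u v \<Longrightarrow> F \<subseteq> G \<Longrightarrow> conn G u v"
  unfolding conn_def
  by (induction rule: rtranclp_induct) (auto intro: rtranclp.rtrancl_into_rtrancl)

lemma conn_insert_edge:
  assumes "conn (insert {x, y} F) u v"
  shows "conn F u v \<or> (conn F u x \<and> conn F y v) \<or> (conn F u y \<and> conn F x v)"
  using assms unfolding conn_def[of "insert {x, y} F"]
proof (induction rule: rtranclp_induct)
  case (step w z)
  show ?case
  proof (cases "{w, z} \<in> F")
    case True
    with step.IH show ?thesis by (meson conn_edge conn_trans)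
  next
    case False
    with step.hyps(2) have "(w = x \<and> z = y) \<or> (w = y \<and> z = x)"
      by (auto simp: doubleton_eq_iff)
    with step.IH show ?thesis by auto
  qed
qed simp

lemma conn_consecutive:
  assumes "\<And>k. lo \<le> k \<Longrightarrow> k < hi \<Longrightarrow> {k, Suc k} \<in> F"
    and "lo \<le> x" "x \<le> hi" "lo \<le> y" "y \<le> hi"
  shows "conn F x y"
proof -
  have "conn F x y" if "lo \<le> x" "x \<le> y" "y \<le> hi" for x y
    using that
  proof (induction y)
    case (Suc y)
    show ?case
    proof (cases "x = Suc y")
      case False
      with Suc have "conn F x y" "{y, Suc y} \<in> F" by (auto intro: assms(1))
      then show ?thesis by (meson conn_edge conn_trans)
    qed simp
  qed simp
  with assms(2-) show ?thesis by (meson conn_sym nat_le_linear)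
qed

definition edge_closed :: "nat set set \<Rightarrow> nat set \<Rightarrow> bool" where
  "edge_closed F S \<longleftrightarrow> (\<forall>u v. {u, v} \<in> F \<longrightarrow> u \<in> S \<longrightarrow> v \<in> S)"

lemma edge_closed_conn:
  assumes "edge_closed F S" "conn F u v" "u \<in> S"
  shows "v \<in> S"
  using assms(2,3,1) unfolding conn_def edge_closed_def by (induction rule: rtranclp_induct) auto

lemma not_conn_if_edge_closed:
  assumes "edge_closed F S" "u \<in> S" "v \<notin> S"
  shows "\<not> conn F u v"
  using assms edge_closed_conn by blast

lemma acyclic_edges_subset: "acyclic_edges F \<Longrightarrow> G \<subseteq> F \<Longrightarrow> acyclic_edges G"
  unfolding acyclic_edges_def by (meson Diff_mono conn_mono in_mono order_refl)

lemma acyclic_edges_insert: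
  assumes acyclic: "acyclic_edges F" and separated: "\<not> conn F x y"
  shows "acyclic_edges (insert {x, y} F)"
  unfolding acyclic_edges_def
proof (intro ballI allI impI notI)
  fix e u v
  assume e: "e \<in> insert {x, y} F" "e = {u, v}" and uv: "conn (insert {x, y} F - {e}) u v"
  show False
  proof (cases "e = {x, y}")
    case True
    with uv have "conn F u v" by (rule_tac conn_mono) auto
    moreover from True e have "(u = x \<and> v = y) \<or> (u = y \<and> v = x)"
      by (auto simp: doubleton_eq_iff)
    ultimately show False using separated conn_sym by blast
  next
    case False
    with e have "e \<in> F" by simp
    let ?F' = "F - {e}"
    from False have "insert {x, y} F - {e} = insert {x, y} ?F'" by auto
    with uv have cases:
      "conn ?F' u v \<or> (conn ?F' u x \<and> conn ?F' y v) \<or> (conn ?F' u y \<and> conn ?F' x v)"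
      using conn_insert_edge by metis
    from acyclic \<open>e \<in> F\<close> e have "\<not> conn ?F' u v"
      unfolding acyclic_edges_def by blast
    with cases have "(conn ?F' x u \<and> conn ?F' v y) \<or> (conn ?F' x v \<and> conn ?F' u y)"
      using conn_sym by blast
    moreover have "conn ?F' a b \<Longrightarrow> conn F a b" for a b
      by (erule conn_mono) auto
    moreover have "conn F u v" "conn F v u"
      using \<open>e \<in> F\<close> e by (auto intro: conn_edge conn_sym)
    ultimately have "conn F x y" by (meson conn_trans)
    with separated show False by simp
  qed
qed

lemma acyclic_edges_path: "acyclic_edges ((\<lambda>k. {k, Suc k}) ` {1..<m})"
proof (induction m)
  case (Suc m)
  show ?case
  proof (cases "m = 0")
    case False
    then have path:
      "(\<lambda>k. {k, Suc k}) ` {1..<Suc m} = insert {m, Suc m} ((\<lambda>k. {k, Suc k}) ` {1..<m})"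
      by (simp add: atLeastLessThanSuc)
    have "edge_closed ((\<lambda>k. {k, Suc k}) ` {1..<m}) {..m}"
      unfolding edge_closed_def by (auto simp: doubleton_eq_iff)
    then have "\<not> conn ((\<lambda>k. {k, Suc k}) ` {1..<m}) m (Suc m)"
      by (rule not_conn_if_edge_closed) auto
    with Suc.IH show ?thesis
      unfolding path by (rule acyclic_edges_insert)
  qed (simp add: acyclic_edges_def)
qed (simp add: acyclic_edges_def)

lemma card_le_2_if_no_three_increasing:
  fixes K :: "'a :: linorder set"
  assumes "finite K" and no_chain: "\<And>a b d. a \<in> K \<Longrightarrow> b \<in> K \<Longrightarrow> d \<in> K \<Longrightarrow> a < b \<Longrightarrow> b < d \<Longrightarrow> False"
  shows "card K \<le> 2"
proof (cases "K = {}")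
  case False
  have "K \<subseteq> {Min K, Max K}"
  proof
    fix x assume "x \<in> K"
    with \<open>finite K\<close> False have "Min K \<le> x" "x \<le> Max K" "Min K \<in> K" "Max K \<in> K"
      by simp_all
    with no_chain[of "Min K" x "Max K"] \<open>x \<in> K\<close> show "x \<in> {Min K, Max K}"
      by (auto simp: order_le_less)
  qed
  then have "card K \<le> card {Min K, Max K}"
    by (rule card_mono[rotated]) simp
  also have "\<dots> \<le> 2"
    by (simp add: card_insert_if)
  finally show ?thesis .
qed simp

lemma choose_two_add: "(a + b) choose 2 = (a choose 2) + (b choose 2) + a * b"
  using vandermonde[of a b 2] by (simp add: numeral_2_eq_2 atMost_Suc)

lemma card_two_subsets_not_within:
  assumes "finite X" "A \<subseteq> X" "B \<subseteq> X" "A \<inter> B = {}"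
  shows "card {Q. Q \<subseteq> X \<and> card Q = 2 \<and> \<not> Q \<subseteq> A \<and> \<not> Q \<subseteq> B}
    = (card X choose 2) - (card A choose 2) - (card B choose 2)"
proof -
  let ?pairs = "\<lambda>S. {Q. Q \<subseteq> S \<and> card Q = 2}"
  have fin: "finite (?pairs S)" if "S \<subseteq> X" for S
    by (rule finite_subset[of _ "Pow X"]) (use that assms(1) in auto)
  have eq: "{Q. Q \<subseteq> X \<and> card Q = 2 \<and> \<not> Q \<subseteq> A \<and> \<not> Q \<subseteq> B} = ?pairs X - (?pairs A \<union> ?pairs B)"
    by blast
  have sub: "?pairs A \<union> ?pairs B \<subseteq> ?pairs X"
    using assms(2,3) by blast
  have disj: "?pairs A \<inter> ?pairs B = {}"
  proof (rule equals0I)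
    fix Q assume "Q \<in> ?pairs A \<inter> ?pairs B"
    with assms(4) have "Q = {}" "card Q = 2"
      by blast+
    then show False
      by simp
  qed
  have count: "card (?pairs S) = card S choose 2" if "S \<subseteq> X" for S
    using n_subsets[OF finite_subset[OF that assms(1)]] .
  have "card (?pairs X - (?pairs A \<union> ?pairs B)) = card (?pairs X) - card (?pairs A \<union> ?pairs B)"
    using sub fin[OF assms(2)] fin[OF assms(3)] by (intro card_Diff_subset) auto
  also have "card (?pairs A \<union> ?pairs B) = card (?pairs A) + card (?pairs B)"
    using disj fin[OF assms(2)] fin[OF assms(3)] by (intro card_Un_disjoint)
  finally show ?thesis
    unfolding eq count[OF assms(2)] count[OF assms(3)] count[OF order_refl] by simp
qed

locale cycle_with_chord =
  fixes n t i j :: nat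
  assumes i_pos: "1 \<le> i" and chord_gap: "i + 1 < j"
    and j_le_t: "j \<le> t" and t_less_n: "t < n"
begin

lemmas vertex_order = i_pos chord_gap j_le_t t_less_n

abbreviation E :: "nat set set" where
  "E \<equiv> cycle_chord_edges n i j"

definition cycle_edge :: "nat \<Rightarrow> nat set" where
  "cycle_edge k = (if k = n then {n, 1} else {k, Suc k})"

lemma cycle_edge_less: "k < n \<Longrightarrow> cycle_edge k = {k, Suc k}"
  by (simp add: cycle_edge_def)

lemma cycle_edge_last: "cycle_edge n = {n, 1}"
  by (simp add: cycle_edge_def)

lemma cycle_chord_edges_eq: "E = insert {i, j} (cycle_edge ` {1..n})"
proof -
  have "cycle_edge ` {1..n} = {{k, Suc k} | k. 1 \<le> k \<and> k < n} \<union> {{n, 1}}"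
    using t_less_n by (force simp: cycle_edge_def)
  then show ?thesis
    unfolding cycle_chord_edges_def by auto
qed

lemma inj_on_cycle_edge: "inj_on cycle_edge {1..n}"
  using t_less_n chord_gap j_le_t
  by (intro inj_onI) (auto simp: cycle_edge_def doubleton_eq_iff split: if_splits)

lemma chord_not_cycle_edge: "{i, j} \<noteq> cycle_edge k"
  using t_less_n chord_gap j_le_t
  by (auto simp: cycle_edge_def doubleton_eq_iff)

lemma cycle_edge_in_E: "k \<in> {1..n} \<Longrightarrow> cycle_edge k \<in> E"
  unfolding cycle_chord_edges_eq by blast

lemma cycle_edges_subset_E: "A \<subseteq> {1..n} \<Longrightarrow> cycle_edge ` A \<subseteq> E"
  unfolding cycle_chord_edges_eq by blast

lemma interval_edge_closed:
  assumes "F \<subseteq> E" "1 \<le> a" "a < b" "b \<le> n"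
    and "cycle_edge a \<notin> F" "cycle_edge b \<notin> F"
    and "{i, j} \<in> F \<longrightarrow> (i \<in> {a<..b} \<longleftrightarrow> j \<in> {a<..b})"
  shows "edge_closed F {a<..b}"
  unfolding edge_closed_def
proof (intro allI impI)
  fix u v
  assume uv: "{u, v} \<in> F" and u: "u \<in> {a<..b}"
  with assms(1) consider "{u, v} = {i, j}" | k where "k \<in> {1..n}" "{u, v} = cycle_edge k"
    unfolding cycle_chord_edges_eq by blast
  then show "v \<in> {a<..b}"
  proof cases
    case 1
    with uv u assms(7) show ?thesis by (auto simp: doubleton_eq_iff)
  next
    case (2 k)
    with uv assms(5,6) have "k \<noteq> a" "k \<noteq> b" by auto
    show ?thesis
    proof (cases "k = n")
      case True
      with 2 u assms(2,4) \<open>k \<noteq> b\<close> show ?thesis by (auto simp: cycle_edge_last doubleton_eq_iff)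
    next
      case False
      with 2 u \<open>k \<noteq> a\<close> \<open>k \<noteq> b\<close> show ?thesis by (auto simp: cycle_edge_less doubleton_eq_iff)
    qed
  qed
qed

lemma conn_along_cycle:
  assumes "\<And>k. lo \<le> k \<Longrightarrow> k < hi \<Longrightarrow> cycle_edge k \<in> F" "hi \<le> n"
    and "lo \<le> x" "x \<le> hi" "lo \<le> y" "y \<le> hi"
  shows "conn F x y"
  using assms by (intro conn_consecutive[of lo hi]) (metis cycle_edge_less order_less_le_trans)+

lemma cycle_edge_in_image_iff:
  "k \<in> {1..n} \<Longrightarrow> A \<subseteq> {1..n} \<Longrightarrow> cycle_edge k \<in> cycle_edge ` A \<longleftrightarrow> k \<in> A"
  by (rule inj_on_image_mem_iff[OF inj_on_cycle_edge])

lemma cycle_edges_Diff: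
  "p \<in> {1..n} \<Longrightarrow> cycle_edge ` {1..n} - {cycle_edge p} = cycle_edge ` ({1..n} - {p})"
  using inj_on_image_set_diff[OF inj_on_cycle_edge, of "{1..n}" "{p}"] by simp

lemma path_eq_cycle_edges: "(\<lambda>k. {k, Suc k}) ` {1..<n} = cycle_edge ` {1..<n}"
  by (auto simp: cycle_edge_less intro!: image_cong)

lemma acyclic_cycle_minus_edge:
  assumes p: "p \<in> {1..n}"
  shows "acyclic_edges (cycle_edge ` {1..n} - {cycle_edge p})"
proof (cases "p = n")
  case True
  then have "{1..n} - {p} = {1..<n}"
    by auto
  with acyclic_edges_path[of n] show ?thesis
    unfolding cycle_edges_Diff[OF p] path_eq_cycle_edges by simp
next
  case False
  let ?F = "cycle_edge ` ({1..<n} - {p})"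
  have "{1..n} - {p} = insert n ({1..<n} - {p})"
    using p False t_less_n by auto
  then have eq: "cycle_edge ` {1..n} - {cycle_edge p} = insert {n, 1} ?F"
    unfolding cycle_edges_Diff[OF p] by (simp add: cycle_edge_last)
  have "edge_closed ?F {p<..n}"
  proof (rule interval_edge_closed)
    show "?F \<subseteq> E"
      by (rule cycle_edges_subset_E) auto
    show "cycle_edge p \<notin> ?F"
      using p by (subst cycle_edge_in_image_iff) auto
    show "cycle_edge n \<notin> ?F"
      using t_less_n by (subst cycle_edge_in_image_iff) auto
    show "{i, j} \<in> ?F \<longrightarrow> (i \<in> {p<..n} \<longleftrightarrow> j \<in> {p<..n})"
      using chord_not_cycle_edge by auto
  qed (use p False in auto)
  then have "\<not> conn ?F n 1"
    by (rule not_conn_if_edge_closed) (use p False in auto)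
  moreover have "acyclic_edges ?F"
    using acyclic_edges_path[of n] unfolding path_eq_cycle_edges
    by (rule acyclic_edges_subset) auto
  ultimately show ?thesis
    unfolding eq by (intro acyclic_edges_insert)
qed

lemma acyclic_minus_outer_and_chord_arc_edge:
  assumes "t \<le> p" "p \<le> n" "i \<le> b" "b < j"
  shows "acyclic_edges (E - {cycle_edge p, cycle_edge b})"
proof -
  let ?F = "cycle_edge ` {1..n} - {cycle_edge p} - {cycle_edge b}"
  have eq: "E - {cycle_edge p, cycle_edge b} = insert {i, j} ?F"
    using chord_not_cycle_edge[of p] chord_not_cycle_edge[of b]
    unfolding cycle_chord_edges_eq by blast
  have "edge_closed ?F {b<..p}"
  proof (rule interval_edge_closed)
    show "?F \<subseteq> E"
      unfolding cycle_chord_edges_eq by blast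
    show "{i, j} \<in> ?F \<longrightarrow> (i \<in> {b<..p} \<longleftrightarrow> j \<in> {b<..p})"
      using chord_not_cycle_edge by blast
  qed (use assms vertex_order in auto)
  then have "\<not> conn ?F j i"
    by (rule not_conn_if_edge_closed) (use assms j_le_t in auto)
  then have "\<not> conn ?F i j"
    using conn_sym by blast
  moreover have "acyclic_edges ?F"
    using acyclic_cycle_minus_edge[of p] assms i_pos j_le_t acyclic_edges_subset by auto
  ultimately show ?thesis
    unfolding eq by (rule acyclic_edges_insert[rotated])
qed

lemma chord_crosses_cut_interval:
  assumes "F \<subseteq> E" and spanning: "\<forall>v\<in>{1..n}. conn F 1 v \<or> conn F t v"
    and "1 \<le> a" "a < b" "b \<le> n" "t \<notin> {a<..b}" "cycle_edge a \<notin> F" "cycle_edge b \<notin> F"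
  shows "{i, j} \<in> F \<and> (i \<in> {a<..b} \<longleftrightarrow> j \<notin> {a<..b})"
proof (rule ccontr)
  assume "\<not> ?thesis"
  then have closed: "edge_closed F {a<..b}"
    using assms by (intro interval_edge_closed) auto
  have "\<not> conn F b 1"
    by (rule not_conn_if_edge_closed[OF closed]) (use assms in auto)
  moreover have "\<not> conn F b t"
    by (rule not_conn_if_edge_closed[OF closed]) (use assms in auto)
  ultimately show False
    using spanning \<open>a < b\<close> \<open>b \<le> n\<close> conn_sym by fastforce
qed

lemma cut_separates_roots:
  assumes "F \<subseteq> E" "1 \<le> a" "a < t" "t \<le> p" "p \<le> n"
    and "cycle_edge a \<notin> F" "cycle_edge p \<notin> F" "{i, j} \<in> F \<longrightarrow> a < i \<or> j \<le> a"
  shows "\<not> conn F 1 t"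
proof -
  have closed: "edge_closed F {a<..p}"
    using assms j_le_t chord_gap by (intro interval_edge_closed) auto
  have "\<not> conn F t 1"
    using assms by (intro not_conn_if_edge_closed[OF closed]) auto
  then show ?thesis
    using conn_sym by blast
qed

definition inner_edges :: "nat set set" where
  "inner_edges = insert {i, j} (cycle_edge ` {1..<t})"

definition chord_arc :: "nat set set" where
  "chord_arc = cycle_edge ` {i..<j}"

definition side_arcs :: "nat set set" where
  "side_arcs = cycle_edge ` ({1..<i} \<union> {j..<t})"

definition removable_pairs :: "nat set set set" where
  "removable_pairs =
     {Q. Q \<subseteq> inner_edges \<and> card Q = 2 \<and> \<not> Q \<subseteq> side_arcs \<and> \<not> Q \<subseteq> chord_arc}"

definition forest_of :: "nat \<Rightarrow> nat set set \<Rightarrow> nat set set" where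
  "forest_of p Q = E - insert (cycle_edge p) Q"

lemma E_eq_inner_Un_outer: "E = inner_edges \<union> cycle_edge ` {t..n}"
proof -
  have "{1..n} = {1..<t} \<union> {t..n}"
    using vertex_order by auto
  then show ?thesis
    unfolding cycle_chord_edges_eq inner_edges_def by auto
qed

lemma outer_edge_not_inner:
  assumes "p \<in> {t..n}"
  shows "cycle_edge p \<notin> inner_edges"
proof -
  have "cycle_edge p \<notin> cycle_edge ` {1..<t}"
    using assms vertex_order by (subst cycle_edge_in_image_iff) auto
  then show ?thesis
    unfolding inner_edges_def using chord_not_cycle_edge by auto
qed

lemma forest_misses_outer_edge:
  assumes "two_tree_forest n E 1 t F"
  shows "\<exists>p\<in>{t..n}. cycle_edge p \<notin> F"
proof (rule ccontr)
  assume "\<not> ?thesis"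
  then have outer: "cycle_edge k \<in> F" if "k \<in> {t..n}" for k
    using that by blast
  have "conn F t n"
    by (rule conn_along_cycle[of t n]) (use outer t_less_n in auto)
  moreover have "conn F n 1"
    using outer[of n] t_less_n by (auto simp: cycle_edge_last intro: conn_edge)
  ultimately show False
    using assms conn_trans conn_sym unfolding two_tree_forest_def by blast
qed

lemma forest_missing_outer_edge_unique:
  assumes "two_tree_forest n E 1 t F"
    and "p \<in> {t..n}" "q \<in> {t..n}" "cycle_edge p \<notin> F" "cycle_edge q \<notin> F"
  shows "p = q"
proof -
  have False
    if "p' \<in> {t..n}" "q' \<in> {t..n}" "p' < q'" "cycle_edge p' \<notin> F" "cycle_edge q' \<notin> F" for p' q'
    using chord_crosses_cut_interval[of F p' q'] assms(1) that vertex_order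
    unfolding two_tree_forest_def by auto
  with assms(2-) show ?thesis
    by (metis linorder_neqE_nat)
qed

lemma cycle_edge_in_inner_edges_iff:
  "k \<in> {1..n} \<Longrightarrow> cycle_edge k \<in> inner_edges \<longleftrightarrow> k \<in> {1..<t}"
  unfolding inner_edges_def using chord_not_cycle_edge t_less_n
  by (subst cycle_edge_in_image_iff[symmetric]) auto

lemma cycle_edge_in_chord_arc_iff:
  "k \<in> {1..n} \<Longrightarrow> cycle_edge k \<in> chord_arc \<longleftrightarrow> k \<in> {i..<j}"
  unfolding chord_arc_def using i_pos j_le_t t_less_n by (subst cycle_edge_in_image_iff) auto

lemma cycle_edge_in_side_arcs_iff:
  "k \<in> {1..n} \<Longrightarrow> cycle_edge k \<in> side_arcs \<longleftrightarrow> k \<in> {1..<i} \<union> {j..<t}"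
  unfolding side_arcs_def using vertex_order by (subst cycle_edge_in_image_iff) auto

lemma chord_in_inner_edges: "{i, j} \<in> inner_edges"
  by (simp add: inner_edges_def)

lemma chord_not_in_arcs: "{i, j} \<notin> chord_arc" "{i, j} \<notin> side_arcs"
  unfolding chord_arc_def side_arcs_def using chord_not_cycle_edge by auto

lemma inner_edges_cases:
  assumes "x \<in> inner_edges"
  obtains "x = {i, j}" | k where "k \<in> {1..<t}" "x = cycle_edge k"
  using assms unfolding inner_edges_def by blast

lemma forest_eq_forest_of:
  assumes "two_tree_forest n E 1 t F" "p \<in> {t..n}" "cycle_edge p \<notin> F"
  shows "F = forest_of p (inner_edges - F)"
proof -
  have "F \<subseteq> E"
    using assms(1) unfolding two_tree_forest_def by simp
  moreover have "cycle_edge q \<in> F" if "q \<in> {t..n}" "q \<noteq> p" for q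
    using forest_missing_outer_edge_unique[OF assms(1) assms(2) that(1) assms(3)] that(2) by auto
  ultimately show ?thesis
    using assms(3) unfolding forest_of_def E_eq_inner_Un_outer by blast
qed

lemma arc_edge_in_if_not_missing:
  "k \<in> {1..<t} \<Longrightarrow> cycle_edge k \<notin> inner_edges - F \<Longrightarrow> cycle_edge k \<in> F"
  using t_less_n cycle_edge_in_inner_edges_iff[of k] by auto

lemma forest_breaks_chord_cycle:
  assumes forest: "two_tree_forest n E 1 t F"
  shows "\<not> inner_edges - F \<subseteq> side_arcs"
proof
  assume missing: "inner_edges - F \<subseteq> side_arcs"
  then have "{i, j} \<in> F"
    using chord_in_inner_edges chord_not_in_arcs by blast
  moreover have "conn (F - {{i, j}}) i j"
  proof (rule conn_along_cycle[of i j])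
    fix k assume "i \<le> k" "k < j"
    then have "cycle_edge k \<notin> side_arcs"
      using i_pos j_le_t t_less_n cycle_edge_in_side_arcs_iff[of k] by auto
    then show "cycle_edge k \<in> F - {{i, j}}"
      using missing arc_edge_in_if_not_missing[of k] chord_not_cycle_edge \<open>i \<le> k\<close> \<open>k < j\<close>
        i_pos j_le_t by auto
  qed (use vertex_order in auto)
  ultimately show False
    using forest unfolding two_tree_forest_def acyclic_edges_def by blast
qed

lemma forest_cuts_side_arcs:
  assumes forest: "two_tree_forest n E 1 t F"
  shows "\<not> inner_edges - F \<subseteq> chord_arc"
proof
  assume missing: "inner_edges - F \<subseteq> chord_arc"
  have side: "cycle_edge k \<in> F" if "k \<in> {1..<i} \<union> {j..<t}" for k
  proof (rule arc_edge_in_if_not_missing)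
    show "k \<in> {1..<t}"
      using that chord_gap j_le_t by auto
    then show "cycle_edge k \<notin> inner_edges - F"
      using missing that t_less_n cycle_edge_in_chord_arc_iff[of k] by auto
  qed
  have "conn F 1 i"
    by (rule conn_along_cycle[of 1 i]) (use side vertex_order in auto)
  moreover have "conn F i j"
    using missing chord_in_inner_edges chord_not_in_arcs by (blast intro: conn_edge)
  moreover have "conn F j t"
    by (rule conn_along_cycle[of j t]) (use side j_le_t t_less_n in auto)
  ultimately show False
    using forest conn_trans unfolding two_tree_forest_def by blast
qed

lemma forest_misses_arc_edge:
  assumes forest: "two_tree_forest n E 1 t F"
  shows "\<not> inner_edges - F \<subseteq> {{i, j}}"
proof
  assume "inner_edges - F \<subseteq> {{i, j}}"
  then have "cycle_edge k \<in> F" if "k \<in> {1..<t}" for k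
    using arc_edge_in_if_not_missing[OF that] chord_not_cycle_edge by blast
  then have "conn F 1 t"
    using vertex_order by (intro conn_along_cycle[of 1 t]) auto
  with forest show False
    unfolding two_tree_forest_def by blast
qed

lemma card_inner_edges_Diff_forest_le_2:
  assumes forest: "two_tree_forest n E 1 t F"
  shows "card (inner_edges - F) \<le> 2"
proof -
  define K where "K = {k \<in> {1..<t}. cycle_edge k \<notin> F}"
  have "finite K"
    unfolding K_def by simp
  have crossing: "{i, j} \<in> F \<and> (i \<in> {a<..b} \<longleftrightarrow> j \<notin> {a<..b})" if "a \<in> K" "b \<in> K" "a < b" for a b
    using chord_crosses_cut_interval[of F a b] forest that vertex_order
    unfolding K_def two_tree_forest_def by auto
  have missing: "inner_edges - F \<subseteq> insert {i, j} (cycle_edge ` K)"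
    unfolding K_def inner_edges_def by blast
  show ?thesis
  proof (cases "{i, j} \<in> F")
    case True
    have "card K \<le> 2"
    proof (rule card_le_2_if_no_three_increasing[OF \<open>finite K\<close>])
      fix a b d assume "a \<in> K" "b \<in> K" "d \<in> K" "a < b" "b < d"
      with crossing[of a b] crossing[of b d] crossing[of a d] vertex_order show False
        by auto
    qed
    moreover have "card (inner_edges - F) \<le> card (cycle_edge ` K)"
      using missing True \<open>finite K\<close> by (intro card_mono) auto
    ultimately show ?thesis
      using card_image_le[OF \<open>finite K\<close>, of cycle_edge] by linarith
  next
    case False
    have "\<forall>a\<in>K. \<forall>b\<in>K. a = b"
      using crossing False by (metis linorder_neqE_nat)
    then have "card K \<le> 1"
      using card_le_Suc0_iff_eq[OF \<open>finite K\<close>] by simp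
    moreover have "card (inner_edges - F) \<le> card (insert {i, j} (cycle_edge ` K))"
      using missing \<open>finite K\<close> by (intro card_mono) auto
    moreover have "card (insert {i, j} (cycle_edge ` K)) \<le> Suc (card K)"
      using card_image_le[OF \<open>finite K\<close>, of cycle_edge] \<open>finite K\<close>
      by (simp add: card_insert_if)
    ultimately show ?thesis
      by linarith
  qed
qed

lemma inner_edges_eq: "inner_edges = insert {i, j} (chord_arc \<union> side_arcs)"
proof -
  have "{1..<t} = {i..<j} \<union> ({1..<i} \<union> {j..<t})"
    using vertex_order by auto
  then show ?thesis
    unfolding inner_edges_def chord_arc_def side_arcs_def by (simp add: image_Un)
qed

lemma inner_edges_Diff_forest_removable:
  assumes forest: "two_tree_forest n E 1 t F"
  shows "inner_edges - F \<in> removable_pairs"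
proof -
  let ?Q = "inner_edges - F"
  obtain x y where x: "x \<in> ?Q" "x \<notin> side_arcs" and y: "y \<in> ?Q" "y \<notin> chord_arc"
    using forest_breaks_chord_cycle[OF forest] forest_cuts_side_arcs[OF forest] by blast
  have "2 \<le> card ?Q"
  proof (rule ccontr)
    assume "\<not> 2 \<le> card ?Q"
    then have "card ?Q \<le> Suc 0"
      by linarith
    moreover have "finite ?Q"
      unfolding inner_edges_def by simp
    ultimately have single: "a = b" if "a \<in> ?Q" "b \<in> ?Q" for a b
      using card_le_Suc0_iff_eq that by metis
    have "x \<notin> chord_arc \<union> side_arcs" "x \<in> inner_edges"
      using single[OF x(1) y(1)] x y by auto
    then have "x = {i, j}"
      unfolding inner_edges_eq by blast
    with single[OF x(1)] have "?Q \<subseteq> {{i, j}}"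
      by blast
    with forest_misses_arc_edge[OF forest] show False ..
  qed
  with card_inner_edges_Diff_forest_le_2[OF forest] have "card ?Q = 2"
    by linarith
  moreover have "?Q \<subseteq> inner_edges" "\<not> ?Q \<subseteq> side_arcs" "\<not> ?Q \<subseteq> chord_arc"
    using x y by blast+
  ultimately show ?thesis
    unfolding removable_pairs_def by simp
qed

lemma cycle_edge_eq_iff: "k \<in> {1..n} \<Longrightarrow> l \<in> {1..n} \<Longrightarrow> cycle_edge k = cycle_edge l \<longleftrightarrow> k = l"
  by (rule inj_on_eq_iff[OF inj_on_cycle_edge])

lemma removable_pair_cases:
  assumes "Q \<in> removable_pairs"
  obtains (chord) b where "b \<in> {1..<t}" "Q = {{i, j}, cycle_edge b}"
    | (arcs) a b where "1 \<le> a" "a < b" "b < t" "Q = {cycle_edge a, cycle_edge b}"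
        "a < i \<and> i \<le> b \<and> b < j \<or> i \<le> a \<and> a < j \<and> j \<le> b"
proof -
  from assms have Q: "Q \<subseteq> inner_edges" "card Q = 2" "\<not> Q \<subseteq> side_arcs" "\<not> Q \<subseteq> chord_arc"
    unfolding removable_pairs_def by auto
  then obtain x y where xy: "x \<noteq> y" "Q = {x, y}"
    by (auto simp: card_2_iff)
  have arcs_ordered: thesis
    if ab: "1 \<le> a" "a < b" "b < t" "Q = {cycle_edge a, cycle_edge b}" for a b
  proof (rule arcs[OF ab])
    have "a \<in> {1..n}" "b \<in> {1..n}"
      using ab t_less_n by auto
    with Q(3,4) ab show "a < i \<and> i \<le> b \<and> b < j \<or> i \<le> a \<and> a < j \<and> j \<le> b"
      by (auto simp: cycle_edge_in_side_arcs_iff cycle_edge_in_chord_arc_iff)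
  qed
  show thesis
  proof (cases "{i, j} \<in> Q")
    case True
    with xy obtain z where z: "Q = {{i, j}, z}" "z \<noteq> {i, j}"
      by auto
    with Q(1) have "z \<in> inner_edges"
      by simp
    then show thesis
    proof (cases rule: inner_edges_cases)
      case (2 b)
      with z show thesis
        by (intro chord) auto
    qed (use z in simp)
  next
    case False
    with xy Q(1) obtain a b where "a \<in> {1..<t}" "b \<in> {1..<t}" "x = cycle_edge a" "y = cycle_edge b"
      by (metis inner_edges_cases insertCI subsetD)
    with xy arcs_ordered show thesis
      by (metis atLeastLessThan_iff insert_commute linorder_neqE_nat)
  qed
qed

lemma acyclic_forest_of:
  assumes p: "p \<in> {t..n}" and Q: "Q \<in> removable_pairs"
  shows "acyclic_edges (forest_of p Q)"
proof -
  from Q obtain x where x: "x \<in> Q" "x \<in> inner_edges" "x \<notin> side_arcs"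
    unfolding removable_pairs_def by blast
  then consider "x = {i, j}" | "x \<in> chord_arc"
    unfolding inner_edges_eq by blast
  then show ?thesis
  proof cases
    case 1
    with x have "forest_of p Q \<subseteq> cycle_edge ` {1..n} - {cycle_edge p}"
      unfolding forest_of_def cycle_chord_edges_eq by blast
    with p acyclic_cycle_minus_edge[of p] vertex_order show ?thesis
      using acyclic_edges_subset by auto
  next
    case 2
    then obtain b where "b \<in> {i..<j}" "x = cycle_edge b"
      unfolding chord_arc_def by blast
    with x have "forest_of p Q \<subseteq> E - {cycle_edge p, cycle_edge b}"
      unfolding forest_of_def by blast
    with p \<open>b \<in> {i..<j}\<close> acyclic_minus_outer_and_chord_arc_edge[of p b] show ?thesis
      using acyclic_edges_subset by auto
  qed
qed

lemma forest_of_subset: "forest_of p Q \<subseteq> E"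
  unfolding forest_of_def by blast

lemma conn_forest_of:
  assumes "p \<in> {t..n}" "1 \<le> lo" "hi \<le> n"
    and "\<And>k. lo \<le> k \<Longrightarrow> k < hi \<Longrightarrow> k \<noteq> p \<and> cycle_edge k \<notin> Q"
    and "lo \<le> x" "x \<le> hi" "lo \<le> y" "y \<le> hi"
  shows "conn (forest_of p Q) x y"
proof (rule conn_along_cycle[of lo hi])
  fix k assume k: "lo \<le> k" "k < hi"
  with assms(1-3) have "k \<in> {1..n}" "p \<in> {1..n}"
    using vertex_order by auto
  with assms(4)[OF k] show "cycle_edge k \<in> forest_of p Q"
    unfolding forest_of_def cycle_chord_edges_eq by (auto simp: cycle_edge_eq_iff)
qed (use assms in auto)

lemma forest_of_reaches_outer:
  assumes p: "p \<in> {t..n}" and Q: "Q \<subseteq> inner_edges" and v: "v \<in> {t..n}"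
  shows "conn (forest_of p Q) 1 v \<or> conn (forest_of p Q) t v"
proof -
  have outer: "k \<noteq> p \<and> cycle_edge k \<notin> Q" if "k \<in> {t..n}" "k \<noteq> p" for k
    using outer_edge_not_inner[OF that(1)] Q that(2) by blast
  show ?thesis
  proof (cases "v \<le> p")
    case True
    have "conn (forest_of p Q) t v"
      by (rule conn_forest_of[OF p, of t p]) (use p v True outer vertex_order in auto)
    then show ?thesis ..
  next
    case False
    have "conn (forest_of p Q) v n"
      by (rule conn_forest_of[OF p, of "Suc p" n]) (use p v False outer in auto)
    moreover have "cycle_edge n \<in> forest_of p Q"
      using False p v outer[of n] vertex_order cycle_edge_in_E[of n] cycle_edge_eq_iff[of n p]
      unfolding forest_of_def by auto
    then have "conn (forest_of p Q) n 1"
      by (simp add: cycle_edge_last conn_edge)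
    ultimately show ?thesis
      using conn_trans conn_sym by blast
  qed
qed

lemma forest_of_reaches_inner_chord_removed:
  assumes p: "p \<in> {t..n}" and b: "b \<in> {1..<t}" and v: "v \<in> {1..<t}"
  defines "F \<equiv> forest_of p {{i, j}, cycle_edge b}"
  shows "conn F 1 v \<or> conn F t v"
proof -
  have kept: "k \<noteq> p \<and> cycle_edge k \<notin> {{i, j}, cycle_edge b}" if "1 \<le> k" "k < t" "k \<noteq> b" for k
    using that b p chord_not_cycle_edge[of k] cycle_edge_eq_iff[of k b] vertex_order by auto
  show ?thesis
  proof (cases "v \<le> b")
    case True
    have "conn F 1 v"
      unfolding F_def
      by (rule conn_forest_of[OF p, of 1 b]) (use True v b kept vertex_order in auto)
    then show ?thesis ..
  next
    case False
    have "conn F t v"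
      unfolding F_def
      by (rule conn_forest_of[OF p, of "Suc b" t]) (use False v b kept vertex_order in auto)
    then show ?thesis ..
  qed
qed

lemma forest_of_reaches_inner_arcs_removed:
  assumes p: "p \<in> {t..n}" and ab: "1 \<le> a" "a < b" "b < t"
    and crossing: "a < i \<and> i \<le> b \<and> b < j \<or> i \<le> a \<and> a < j \<and> j \<le> b"
    and v: "v \<in> {1..<t}"
  defines "F \<equiv> forest_of p {cycle_edge a, cycle_edge b}"
  shows "conn F 1 v \<or> conn F t v"
proof -
  have kept: "k \<noteq> p \<and> cycle_edge k \<notin> {cycle_edge a, cycle_edge b}"
    if "1 \<le> k" "k < t" "k \<noteq> a" "k \<noteq> b" for k
    using that ab p cycle_edge_eq_iff[of k a] cycle_edge_eq_iff[of k b] vertex_order by auto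
  have left: "conn F 1 w" if "1 \<le> w" "w \<le> a" for w
    unfolding F_def by (rule conn_forest_of[OF p, of 1 a]) (use that ab kept vertex_order in auto)
  have right: "conn F t w" if "b < w" "w \<le> t" for w
    unfolding F_def
    by (rule conn_forest_of[OF p, of "Suc b" t]) (use that ab kept vertex_order in auto)
  have middle: "conn F v w" if "a < v" "v \<le> b" "a < w" "w \<le> b" for w
    unfolding F_def
    by (rule conn_forest_of[OF p, of "Suc a" b]) (use that ab kept vertex_order in auto)
  have chord: "conn F i j"
    unfolding F_def using chord_not_cycle_edge
    by (intro conn_edge) (auto simp: forest_of_def cycle_chord_edges_eq)
  consider "v \<le> a" | "b < v" | "a < v" "v \<le> b" "a < i" | "a < v" "v \<le> b" "i \<le> a"
    by linarith
  then show ?thesis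
  proof cases
    case 3
    with crossing have "i \<le> b" "b < j"
      by auto
    have "conn F t j"
      using right \<open>b < j\<close> j_le_t by blast
    also have "conn F j i"
      using chord by (rule conn_sym)
    also have "conn F i v"
      using middle[of i] 3 \<open>i \<le> b\<close> by (blast intro: conn_sym)
    finally show ?thesis ..
  next
    case 4
    with crossing have "a < j" "j \<le> b"
      by auto
    have "conn F 1 i"
      using left i_pos 4 by blast
    also note chord
    also have "conn F j v"
      using middle[of j] 4 \<open>a < j\<close> \<open>j \<le> b\<close> by (blast intro: conn_sym)
    finally show ?thesis ..
  qed (use left right v in auto)
qed

lemma forest_of_reaches_inner:
  assumes "p \<in> {t..n}" "Q \<in> removable_pairs" "v \<in> {1..<t}"
  shows "conn (forest_of p Q) 1 v \<or> conn (forest_of p Q) t v"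
  using assms(2)
proof (cases rule: removable_pair_cases)
  case (chord b)
  with assms(1,3) show ?thesis
    using forest_of_reaches_inner_chord_removed by blast
next
  case (arcs a b)
  with assms(1,3) show ?thesis
    using forest_of_reaches_inner_arcs_removed by blast
qed

lemma forest_of_separates_roots:
  assumes p: "p \<in> {t..n}" and Q: "Q \<in> removable_pairs"
  shows "\<not> conn (forest_of p Q) 1 t"
proof -
  have removed: "cycle_edge p \<notin> forest_of p Q" "\<And>e. e \<in> Q \<Longrightarrow> e \<notin> forest_of p Q"
    unfolding forest_of_def by auto
  obtain a where a: "1 \<le> a" "a < t" "cycle_edge a \<in> Q"
    and chord: "{i, j} \<in> forest_of p Q \<longrightarrow> a < i \<or> j \<le> a"
    using Q
  proof (cases rule: removable_pair_cases)
    case (chord b)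
    with removed(2)[of "{i, j}"] show thesis
      by (intro that[of b]) auto
  next
    case (arcs a b)
    show thesis
    proof (cases "a < i")
      case True
      with arcs show thesis
        by (intro that[of a]) auto
    next
      case False
      with arcs show thesis
        by (intro that[of b]) auto
    qed
  qed
  from p have "t \<le> p" "p \<le> n"
    by auto
  with a chord removed show ?thesis
    by (intro cut_separates_roots[OF forest_of_subset]) auto
qed

lemma forest_of_two_tree_forest:
  assumes "p \<in> {t..n}" "Q \<in> removable_pairs"
  shows "two_tree_forest n E 1 t (forest_of p Q)"
proof -
  have "Q \<subseteq> inner_edges"
    using assms(2) unfolding removable_pairs_def by simp
  have spanning: "conn (forest_of p Q) 1 v \<or> conn (forest_of p Q) t v" if "v \<in> {1..n}" for v
  proof (cases "t \<le> v")
    case True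
    with that show ?thesis
      using forest_of_reaches_outer[OF assms(1) \<open>Q \<subseteq> inner_edges\<close>] by simp
  next
    case False
    with that show ?thesis
      using forest_of_reaches_inner[OF assms] by simp
  qed
  show ?thesis
    unfolding two_tree_forest_def
    using forest_of_subset acyclic_forest_of[OF assms] forest_of_separates_roots[OF assms] spanning
    by blast
qed

lemma removed_edges_forest_of:
  assumes "p \<in> {t..n}" "Q \<in> removable_pairs"
  shows "E - forest_of p Q = insert (cycle_edge p) Q"
  using assms cycle_edge_in_E[of p] vertex_order E_eq_inner_Un_outer
  unfolding forest_of_def removable_pairs_def by auto

lemma inj_on_forest_of: "inj_on (\<lambda>(p, Q). forest_of p Q) ({t..n} \<times> removable_pairs)"
proof (rule inj_onI, clarify)
  fix p Q p' Q'
  assume p: "p \<in> {t..n}" "Q \<in> removable_pairs" and p': "p' \<in> {t..n}" "Q' \<in> removable_pairs"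
    and eq: "forest_of p Q = forest_of p' Q'"
  have removed: "insert (cycle_edge p) Q = insert (cycle_edge p') Q'"
    using removed_edges_forest_of[OF p] removed_edges_forest_of[OF p'] eq by simp
  have "cycle_edge p \<notin> Q'" "cycle_edge p' \<notin> Q"
    using p p' outer_edge_not_inner unfolding removable_pairs_def by blast+
  with removed have "cycle_edge p = cycle_edge p'"
    by blast
  with p(1) p'(1) have "p = p'"
    using vertex_order by (subst (asm) cycle_edge_eq_iff) auto
  moreover have "Q = Q'"
    using removed \<open>cycle_edge p \<notin> Q'\<close> \<open>cycle_edge p' \<notin> Q\<close> \<open>p = p'\<close>
    by (metis Diff_insert_absorb)
  ultimately show "p = p' \<and> Q = Q'" ..
qed

lemma two_tree_forests_eq:
  "{F. two_tree_forest n E 1 t F} = (\<lambda>(p, Q). forest_of p Q) ` ({t..n} \<times> removable_pairs)"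
proof
  show "{F. two_tree_forest n E 1 t F} \<subseteq> (\<lambda>(p, Q). forest_of p Q) ` ({t..n} \<times> removable_pairs)"
  proof
    fix F assume "F \<in> {F. two_tree_forest n E 1 t F}"
    then have forest: "two_tree_forest n E 1 t F"
      by simp
    then obtain p where "p \<in> {t..n}" "cycle_edge p \<notin> F"
      using forest_misses_outer_edge by blast
    with forest show "F \<in> (\<lambda>(p, Q). forest_of p Q) ` ({t..n} \<times> removable_pairs)"
      using forest_eq_forest_of inner_edges_Diff_forest_removable by fastforce
  qed
  show "(\<lambda>(p, Q). forest_of p Q) ` ({t..n} \<times> removable_pairs) \<subseteq> {F. two_tree_forest n E 1 t F}"
    using forest_of_two_tree_forest by auto
qed

lemma card_removable_pairs: "card removable_pairs = (i - 1 + (t - j)) * (j - i + 1) + (j - i)"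
proof -
  have card_arcs: "card (cycle_edge ` S) = card S" if "S \<subseteq> {1..n}" for S
    using card_image[OF inj_on_subset[OF inj_on_cycle_edge that]] .
  have ranges: "{1..<t} \<subseteq> {1..n}" "{1..<i} \<union> {j..<t} \<subseteq> {1..n}" "{i..<j} \<subseteq> {1..n}"
    using vertex_order by auto
  have "card inner_edges = Suc (card (cycle_edge ` {1..<t}))"
    using chord_not_cycle_edge unfolding inner_edges_def by (subst card_insert_disjoint) auto
  also have "\<dots> = t"
    using card_arcs[OF ranges(1)] vertex_order by simp
  finally have "card inner_edges = t" .
  moreover have "card side_arcs = i - 1 + (t - j)"
    unfolding side_arcs_def card_arcs[OF ranges(2)] using vertex_order
    by (subst card_Un_disjoint) auto
  moreover have "card chord_arc = j - i"
    unfolding chord_arc_def card_arcs[OF ranges(3)] by simp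
  moreover have "side_arcs \<inter> chord_arc = {}"
    unfolding chord_arc_def side_arcs_def using ranges vertex_order
    by (subst inj_on_image_Int[OF inj_on_cycle_edge, symmetric]) auto
  moreover have "chord_arc \<subseteq> inner_edges" "side_arcs \<subseteq> inner_edges" "finite inner_edges"
    unfolding inner_edges_eq by (auto simp: chord_arc_def side_arcs_def)
  ultimately have
    "card removable_pairs = (t choose 2) - ((i - 1 + (t - j)) choose 2) - ((j - i) choose 2)"
    unfolding removable_pairs_def by (simp add: card_two_subsets_not_within[of inner_edges])
  moreover
  define s m where "s = i - 1 + (t - j)" and "m = j - i"
  have "t = s + (m + 1)"
    using vertex_order unfolding s_def m_def by simp
  then have "t choose 2 = (s choose 2) + (m choose 2) + s * (m + 1) + m"
    using choose_two_add[of s "m + 1"] choose_two_add[of m 1] by simp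
  ultimately show ?thesis
    unfolding s_def m_def by simp
qed

theorem F2_cycle_with_chord:
  "F2 n E 1 t = (n + 1 - t) * ((i - 1 + (t - j)) * (j - i + 1) + (j - i))"
  unfolding F2_def two_tree_forests_eq card_image[OF inj_on_forest_of] card_cartesian_product
    card_removable_pairs by simp

end

theorem proposition7p6:
  fixes n t i j :: nat
  assumes "n \<ge> 3" and "2 \<le> t" and "t \<le> (n + 1) div 2"
    and "1 \<le> i" and "i < j" and "j \<le> t" and "j \<noteq> i + 1"
  shows "int (F2 n (cycle_chord_edges n i j) 1 t) =
    (if i = 1 \<and> j = t then (int t - 1) * (int n - int t + 1)
     else (int n - int t + 1) * ((int t - int j + int i) * (int j - int i + 1) - 1))"
proof -
  have "t < n"
    using assms(1,3) by linarith
  with assms interpret cycle_with_chord n t i j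
    by unfold_locales auto
  have differences: "int (n + 1 - t) = int n + 1 - int t" "int (i - 1) = int i - 1"
    "int (t - j) = int t - int j" "int (j - i) = int j - int i"
    using vertex_order by auto
  have "int (F2 n (cycle_chord_edges n i j) 1 t) =
      (int n + 1 - int t) * ((int i - 1 + (int t - int j)) * (int j - int i + 1) + (int j - int i))"
    unfolding F2_cycle_with_chord of_nat_mult of_nat_add of_nat_1 differences ..
  also have "\<dots> = (int n - int t + 1) * ((int t - int j + int i) * (int j - int i + 1) - 1)"
    by (simp add: algebra_simps)
  finally show ?thesis
    \<comment> \<open>for i = 1 and j = t the two branches of the statement coincide\<close>
    by (simp add: mult.commute)
qed

end
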